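(* Let $\alpha_1,\nu_1,\alpha_2,\nu_2,\omega_1,\omega_2,\xi_1,\xi_2$ be positive real numbers. Define, for $h\ge 0$, $$\widetilde{\varphi}_{\mathcal{CM}}(h)=\omega_1\,\frac{\gamma\big(\nu_1/2,(h^2+\alpha_1)\xi_1\big)}{\Gamma(\nu_1/2)}\,\varphi_{\mathcal{C}}(h;\alpha_1,\nu_1)+\omega_2\left[\varphi_{\mathcal{M}}(h;\alpha_2,\nu_2)-\frac{1}{\Gamma(\nu_2)}\,\Gamma\!\left(\nu_2;\frac{1}{4\xi_2\alpha_2^2};\frac{h^2}{4\alpha_2^2}\right)\right].$$ Then $\widetilde{\varphi}_{\mathcal{CM}}$ is positive definite in $\mathbb{R}^d$ for every $d\in\mathbb{N}$, i.e. for every $d,k\in\mathbb{N}$, all $a_1,\dots,a_k\in\mathbb{R}$ and all $\mathbf{s}_1,\dots,\mathbf{s}_k\in\mathbb{R}^d$, $\sum_{i,j=1}^k a_ia_j\,\widetilde{\varphi}_{\mathcal{CM}}(\|\mathbf{s}_i-\mathbf{s}_j\|)\ge 0$.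
   Context: $\Gamma$ denotes the gamma function. The lower incomplete gamma function is $\gamma(a,x)=\int_0^x t^{a-1}e^{-t}\,dt$ for $a>0,x\ge0$. The generalized incomplete gamma function is $\Gamma(a;b;c)=\int_b^\infty t^{a-1}\exp(-t-c\,t^{-1})\,dt$ for $a>0$, $b>0$, $c\ge 0$. The Matérn function is $\varphi_{\mathcal{M}}(h;\alpha,\nu)=\frac{2^{1-\nu}}{\Gamma(\nu)}(h/\alpha)^\nu K_\nu(h/\alpha)$ for $h>0$, with $\varphi_{\mathcal{M}}(0;\alpha,\nu)=1$ (continuous extension), where $K_\nu$ is the modified Bessel function of the second kind and $\alpha,\nu>0$. The Cauchy function is $\varphi_{\mathcal{C}}(h;\alpha,\nu)=(1+h^2/\alpha)^{-\nu/2}$, $h\ge0$, $\alpha,\nu>0$. *)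

theory Defs
  imports "HOL-Analysis.Analysis"
begin

definition lower_inc_gamma :: "real \<Rightarrow> real \<Rightarrow> real" where
  "lower_inc_gamma a x = integral {0..x} (\<lambda>t. t powr (a - 1) * exp (- t))"

definition gen_inc_gamma :: "real \<Rightarrow> real \<Rightarrow> real \<Rightarrow> real" where
  "gen_inc_gamma a b c = integral {b..} (\<lambda>t. t powr (a - 1) * exp (- t - c / t))"

definition besselK :: "real \<Rightarrow> real \<Rightarrow> real" where
  "besselK \<nu> x = integral {0..} (\<lambda>t. exp (- x * cosh t) * cosh (\<nu> * t))"

text \<open>Matern function, with continuous extension 1 at h = 0.\<close>
definition matern :: "real \<Rightarrow> real \<Rightarrow> real \<Rightarrow> real" where
  "matern h \<alpha> \<nu> = (if h = 0 then 1 else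
     2 powr (1 - \<nu>) / Gamma \<nu> * (h / \<alpha>) powr \<nu> * besselK \<nu> (h / \<alpha>))"

definition cauchy :: "real \<Rightarrow> real \<Rightarrow> real \<Rightarrow> real" where
  "cauchy h \<alpha> \<nu> = (1 + h\<^sup>2 / \<alpha>) powr (- \<nu> / 2)"

definition phiCM :: "real \<Rightarrow> real \<Rightarrow> real \<Rightarrow> real \<Rightarrow> real \<Rightarrow> real \<Rightarrow> real \<Rightarrow> real \<Rightarrow> real \<Rightarrow> real" where
  "phiCM \<alpha>1 \<nu>1 \<alpha>2 \<nu>2 \<omega>1 \<omega>2 \<xi>1 \<xi>2 h =
     \<omega>1 * (lower_inc_gamma (\<nu>1 / 2) ((h\<^sup>2 + \<alpha>1) * \<xi>1) / Gamma (\<nu>1 / 2)) * cauchy h \<alpha>1 \<nu>1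
   + \<omega>2 * (matern h \<alpha>2 \<nu>2
       - 1 / Gamma \<nu>2 * gen_inc_gamma \<nu>2 (1 / (4 * \<xi>2 * \<alpha>2\<^sup>2)) (h\<^sup>2 / (4 * \<alpha>2\<^sup>2)))"

end

theory Submission
  imports Defs
begin

text \<open>Both summands of the covariance are nonnegative scale mixtures of Gaussian kernels
  \<open>exp (- u h\<^sup>2)\<close>, and Gaussian kernels are positive definite in every dimension: after
  factoring out \<open>exp (- u |s\<^sub>i|\<^sup>2)\<close>, the matrix \<open>exp (2u s\<^sub>i \<bullet> s\<^sub>j)\<close> is a power series with
  nonnegative coefficients in the Gram matrix, and Schur powers of a Gram matrix are Gram matrices.
  For the Cauchy part, the substitution \<open>t = (h\<^sup>2 + \<alpha>) u\<close> in the lower incomplete gamma function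
  exhibits the first summand as \<open>\<omega>\<^sub>1 \<alpha>\<^bsup>\<nu>/2\<^esup>/\<Gamma>(\<nu>/2) \<integral>\<^sub>0\<^sup>\<xi> u\<^bsup>\<nu>/2-1\<^esup> e\<^bsup>-\<alpha>u\<^esup> e\<^bsup>-u h\<^sup>2\<^esup> du\<close>.
  For the Matern part, the substitutions \<open>t = (x/2) e\<^bsup>\<plusminus>u\<^esup>\<close> turn the integral representation of
  \<open>K\<^sub>\<nu>\<close> into \<open>\<integral>\<^sub>0\<^sup>\<infinity> t\<^bsup>\<nu>-1\<^esup> exp (- t - x\<^sup>2/(4t)) dt = 2 (x/2)\<^sup>\<nu> K\<^sub>\<nu>(x)\<close>; hence the bracket in the
  second summand is \<open>\<Gamma>(\<nu>)\<^sup>-\<^sup>1 \<integral>\<^sub>0\<^sup>b t\<^bsup>\<nu>-1\<^esup> e\<^sup>-\<^sup>t exp (- h\<^sup>2/(4\<alpha>\<^sup>2t)) dt\<close> with \<open>b = 1/(4\<xi>\<alpha>\<^sup>2)\<close>: the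
  generalized incomplete gamma function removes exactly the tail \<open>t > b\<close>.\<close>

lemma inner_power_psd:
  fixes x :: "nat \<Rightarrow> 'a::euclidean_space"
  shows "(\<Sum>i<k. \<Sum>j<k. c i * c j * (x i \<bullet> x j) ^ n) \<ge> 0"
proof (induction n arbitrary: c)
  case 0
  have "(\<Sum>i<k. \<Sum>j<k. c i * c j * (x i \<bullet> x j) ^ 0) = (\<Sum>i<k. c i)\<^sup>2"
    by (simp add: power2_eq_square sum_product)
  then show ?case by simp
next
  case (Suc n)
  have "(x i \<bullet> x j) ^ Suc n = (\<Sum>b\<in>Basis. (x i \<bullet> b) * (x j \<bullet> b)) * (x i \<bullet> x j) ^ n" for i j
    by (metis euclidean_inner power_Suc)
  then have "(\<Sum>i<k. \<Sum>j<k. c i * c j * (x i \<bullet> x j) ^ Suc n)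
     = (\<Sum>b\<in>Basis. \<Sum>i<k. \<Sum>j<k. (c i * (x i \<bullet> b)) * (c j * (x j \<bullet> b)) * (x i \<bullet> x j) ^ n)"
    by (simp add: sum_distrib_left sum_distrib_right sum.swap[of _ Basis] mult_ac)
  also have "\<dots> \<ge> 0"
    by (rule sum_nonneg) (rule Suc.IH)
  finally show ?case .
qed

lemma exp_inner_psd:
  fixes x :: "nat \<Rightarrow> 'a::euclidean_space"
  shows "(\<Sum>i<k. \<Sum>j<k. c i * c j * exp (x i \<bullet> x j)) \<ge> 0"
proof -
  have "(\<lambda>n. \<Sum>i<k. \<Sum>j<k. c i * c j * ((x i \<bullet> x j) ^ n /\<^sub>R fact n))
        sums (\<Sum>i<k. \<Sum>j<k. c i * c j * exp (x i \<bullet> x j))"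
    by (intro sums_sum sums_mult exp_converges)
  moreover have "(\<lambda>n. \<Sum>i<k. \<Sum>j<k. c i * c j * ((x i \<bullet> x j) ^ n /\<^sub>R fact n))
     = (\<lambda>n. (\<Sum>i<k. \<Sum>j<k. c i * c j * (x i \<bullet> x j) ^ n) / fact n)"
    by (simp add: sum_divide_distrib divide_inverse mult_ac sum_distrib_left)
  ultimately have series: "(\<lambda>n. (\<Sum>i<k. \<Sum>j<k. c i * c j * (x i \<bullet> x j) ^ n) / fact n)
      sums (\<Sum>i<k. \<Sum>j<k. c i * c j * exp (x i \<bullet> x j))"
    by simp
  show ?thesis
    by (rule sums_le[OF _ sums_zero series]) (simp add: inner_power_psd)
qed

lemma gaussian_psd:
  fixes s :: "nat \<Rightarrow> 'a::euclidean_space"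
  assumes "u \<ge> 0"
  shows "(\<Sum>i<k. \<Sum>j<k. a i * a j * exp (- (u * (norm (s i - s j))\<^sup>2))) \<ge> 0"
proof -
  define c where "c i = a i * exp (- u * (norm (s i))\<^sup>2)" for i
  define y where "y i = sqrt (2 * u) *\<^sub>R s i" for i
  have "a i * a j * exp (- (u * (norm (s i - s j))\<^sup>2)) = c i * c j * exp (y i \<bullet> y j)" for i j
  proof -
    have norm_diff: "(norm (s i - s j))\<^sup>2 = (norm (s i))\<^sup>2 + (norm (s j))\<^sup>2 - 2 * (s i \<bullet> s j)"
      by (simp add: power2_norm_eq_inner inner_diff_left inner_diff_right inner_commute)
    have "y i \<bullet> y j = 2 * u * (s i \<bullet> s j)"
      using assms by (simp add: y_def)
    then have "- (u * (norm (s i - s j))\<^sup>2)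
        = - u * (norm (s i))\<^sup>2 + - u * (norm (s j))\<^sup>2 + y i \<bullet> y j"
      unfolding norm_diff by (simp add: algebra_simps)
    then have "exp (- (u * (norm (s i - s j))\<^sup>2))
        = exp (- u * (norm (s i))\<^sup>2) * exp (- u * (norm (s j))\<^sup>2) * exp (y i \<bullet> y j)"
      by (simp only: exp_add)
    then show ?thesis
      by (simp add: c_def mult_ac)
  qed
  then show ?thesis
    using exp_inner_psd[where k=k and c=c and x=y] by simp
qed

lemma gaussian_mixture_psd:
  fixes s :: "nat \<Rightarrow> 'a::euclidean_space"
  assumes mixture: "\<And>h. h \<ge> 0 \<Longrightarrow> ((\<lambda>v. w v * exp (- (g v * h\<^sup>2))) has_integral \<phi> h) S"
    and w: "\<And>v. v \<in> S \<Longrightarrow> w v \<ge> 0" and g: "\<And>v. v \<in> S \<Longrightarrow> g v \<ge> 0"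
  shows "(\<Sum>i<k. \<Sum>j<k. a i * a j * \<phi> (norm (s i - s j))) \<ge> 0"
proof -
  let ?q = "\<lambda>v. \<Sum>i<k. \<Sum>j<k. a i * a j * (w v * exp (- (g v * (norm (s i - s j))\<^sup>2)))"
  have "(?q has_integral (\<Sum>i<k. \<Sum>j<k. a i * a j * \<phi> (norm (s i - s j)))) S"
    by (intro has_integral_sum has_integral_mult_right mixture finite_lessThan norm_ge_zero)
  moreover have "?q v \<ge> 0" if "v \<in> S" for v
  proof -
    have "?q v = w v * (\<Sum>i<k. \<Sum>j<k. a i * a j * exp (- (g v * (norm (s i - s j))\<^sup>2)))"
      by (simp add: sum_distrib_left mult_ac)
    then show ?thesis
      using w[OF that] gaussian_psd[OF g[OF that], where k=k and a=a and s=s] by simp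
  qed
  ultimately show ?thesis
    by (rule has_integral_nonneg)
qed

lemma absolutely_integrable_on_subset:
  assumes "f absolutely_integrable_on A" "B \<in> sets lebesgue" "B \<subseteq> A"
  shows "f absolutely_integrable_on B"
  using assms unfolding absolutely_integrable_on_def by (rule set_integrable_subset)

lemma integral_Un_absolutely_integrable:
  fixes f :: "'a::euclidean_space \<Rightarrow> 'b::euclidean_space"
  assumes f: "f absolutely_integrable_on (A \<union> B)" and "A \<in> sets lebesgue" "B \<in> sets lebesgue"
    and "negligible (A \<inter> B)"
  shows "integral (A \<union> B) f = integral A f + integral B f"
proof (rule integral_Un)
  show "f integrable_on A" "f integrable_on B"
    using assms by (auto intro!: set_lebesgue_integral_eq_integral(1) absolutely_integrable_on_subset[OF f])
qed fact

lemma has_integral_change_of_variables_real: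
  fixes f g g' :: "real \<Rightarrow> real"
  assumes "S \<in> sets lebesgue"
    and "\<And>x. x \<in> S \<Longrightarrow> (g has_field_derivative g' x) (at x within S)"
    and "inj_on g S" and "f absolutely_integrable_on g ` S"
  shows "((\<lambda>x. \<bar>g' x\<bar> * f (g x)) has_integral integral (g ` S) f) S"
proof -
  have "(\<lambda>x. \<bar>g' x\<bar> * f (g x)) absolutely_integrable_on S
      \<and> integral S (\<lambda>x. \<bar>g' x\<bar> * f (g x)) = integral (g ` S) f"
    using has_absolute_integral_change_of_variables_1' assms by blast
  then show ?thesis
    by (metis integrable_integral set_lebesgue_integral_eq_integral(1))
qed

lemma Gamma_integrand_absolutely_integrable:
  fixes a :: real
  assumes "a > 0"
  shows "(\<lambda>t. t powr (a - 1) * exp (- t)) absolutely_integrable_on {0..}"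
proof (rule nonnegative_absolutely_integrable_1)
  show "(\<lambda>t. t powr (a - 1) * exp (- t)) integrable_on {0..}"
    using Gamma_integral_real[OF assms] by (simp add: exp_minus divide_inverse has_integral_integrable)
qed simp

lemma gen_inc_gamma_integrand_absolutely_integrable:
  fixes \<nu> c :: real
  assumes \<nu>: "\<nu> > 0" and c: "c \<ge> 0"
  shows "(\<lambda>t. t powr (\<nu> - 1) * exp (- t - c / t)) absolutely_integrable_on {0..}"
proof -
  have "(\<lambda>t. t powr (\<nu> - 1) * exp (- t - c / t)) absolutely_integrable_on {0<..}"
  proof (rule measurable_bounded_by_integrable_imp_absolutely_integrable)
    show "(\<lambda>t. t powr (\<nu> - 1) * exp (- t - c / t)) \<in> borel_measurable (lebesgue_on {0<..})"
      by (intro continuous_imp_measurable_on_sets_lebesgue continuous_intros) auto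
    show "(\<lambda>t. t powr (\<nu> - 1) * exp (- t)) integrable_on {0<..}"
      by (intro set_lebesgue_integral_eq_integral(1) absolutely_integrable_on_subset
          [OF Gamma_integrand_absolutely_integrable[OF \<nu>]]) auto
    show "norm (t powr (\<nu> - 1) * exp (- t - c / t)) \<le> t powr (\<nu> - 1) * exp (- t)"
      if "t \<in> {0<..}" for t
      using that c by (simp add: mult_left_mono)
  qed auto
  then show ?thesis
    by (subst absolutely_integrable_spike_set_eq[where T="{0<..}"])
      (auto intro: negligible_subset[of "{0}"])
qed

lemma lower_inc_gamma_scaled_has_integral:
  assumes "a > 0" "L > 0"
  shows "((\<lambda>u. L powr a * u powr (a - 1) * exp (- (L * u))) has_integral lower_inc_gamma a (L * \<xi>))
    {0..\<xi>}"
proof -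
  let ?G = "\<lambda>t. t powr (a - 1) * exp (- t)"
  have image: "(\<lambda>u. L * u) ` {0..\<xi>} = {0..L * \<xi>}"
    using \<open>L > 0\<close> by (auto simp: image_iff intro!: bexI[where x="_ / L"])
  have "((\<lambda>u. \<bar>L\<bar> * ?G (L * u)) has_integral integral ((\<lambda>u. L * u) ` {0..\<xi>}) ?G) {0..\<xi>}"
  proof (rule has_integral_change_of_variables_real)
    show "?G absolutely_integrable_on (\<lambda>u. L * u) ` {0..\<xi>}"
      unfolding image
      by (rule absolutely_integrable_on_subset[OF Gamma_integrand_absolutely_integrable]) (use assms in auto)
    show "inj_on ((*) L) {0..\<xi>}"
      using \<open>L > 0\<close> by (auto simp: inj_on_def)
  qed (auto intro!: derivative_eq_intros)
  moreover have "\<bar>L\<bar> * ?G (L * u) = L powr a * u powr (a - 1) * exp (- (L * u))" if "u \<in> {0..\<xi>}" for u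
    using that assms by (simp add: powr_mult powr_diff)
  ultimately show ?thesis
    unfolding image lower_inc_gamma_def by (rule has_integral_eq[rotated])
qed

lemma cauchy_lower_inc_gamma_has_integral:
  assumes \<alpha>: "\<alpha> > 0" and \<nu>: "\<nu> > 0"
  shows "((\<lambda>u. \<alpha> powr (\<nu>/2) / Gamma (\<nu>/2) * (u powr (\<nu>/2 - 1) * exp (- (\<alpha> * u))) * exp (- (u * h\<^sup>2)))
    has_integral lower_inc_gamma (\<nu>/2) ((h\<^sup>2 + \<alpha>) * \<xi>) / Gamma (\<nu>/2) * cauchy h \<alpha> \<nu>) {0..\<xi>}"
proof -
  define a where "a = \<nu>/2"
  define L where "L = h\<^sup>2 + \<alpha>"
  have a: "a > 0" and L: "L > 0"
    using \<alpha> \<nu> by (auto simp: a_def L_def add_nonneg_pos)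
  have \<Gamma>: "Gamma a > 0"
    using a by (rule Gamma_real_pos)
  define C where "C = \<alpha> powr a / (Gamma a * L powr a)"
  have "cauchy h \<alpha> \<nu> = (L / \<alpha>) powr (- a)"
    using \<alpha> by (simp add: cauchy_def a_def L_def field_simps)
  also have "\<dots> = \<alpha> powr a / L powr a"
    using L \<alpha> by (simp add: powr_minus powr_divide)
  finally have total: "C * lower_inc_gamma a (L * \<xi>) = lower_inc_gamma a (L * \<xi>) / Gamma a * cauchy h \<alpha> \<nu>"
    by (simp add: C_def)
  have integrand: "(\<lambda>u. C * (L powr a * u powr (a - 1) * exp (- (L * u))))
      = (\<lambda>u. \<alpha> powr a / Gamma a * (u powr (a - 1) * exp (- (\<alpha> * u))) * exp (- (u * h\<^sup>2)))"
    using L \<Gamma> by (simp add: C_def L_def algebra_simps fun_eq_iff flip: exp_add)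
  show ?thesis
    unfolding a_def[symmetric] L_def[symmetric] integrand[symmetric] total[symmetric]
    by (rule has_integral_mult_right[OF lower_inc_gamma_scaled_has_integral[OF a L]])
qed

lemma has_integral_exp_substitution:
  fixes f :: "real \<Rightarrow> real"
  assumes p: "p > 0" and f: "f absolutely_integrable_on {0<..}"
  shows "((\<lambda>u. p * exp u * f (p * exp u)) has_integral integral {p..} f) {0..}"
    and "((\<lambda>u. p * exp (- u) * f (p * exp (- u))) has_integral integral {0<..p} f) {0..}"
proof -
  have upper_image: "(\<lambda>u. p * exp u) ` {0..} = {p..}"
  proof -
    have "t \<in> (\<lambda>u. p * exp u) ` {0..}" if "t \<ge> p" for t
      using that p by (intro image_eqI[where x="ln (t / p)"]) auto
    then show ?thesis
      using p by auto
  qed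
  have "((\<lambda>u. \<bar>p * exp u\<bar> * f (p * exp u)) has_integral integral ((\<lambda>u. p * exp u) ` {0..}) f) {0..}"
  proof (rule has_integral_change_of_variables_real)
    show "f absolutely_integrable_on (\<lambda>u. p * exp u) ` {0..}"
      unfolding upper_image by (rule absolutely_integrable_on_subset[OF f]) (use p in auto)
  qed (use p in \<open>auto simp: inj_on_def intro!: derivative_eq_intros\<close>)
  then show "((\<lambda>u. p * exp u * f (p * exp u)) has_integral integral {p..} f) {0..}"
    using p by (simp add: upper_image abs_of_pos)
  have lower_image: "(\<lambda>u. p * exp (- u)) ` {0..} = {0<..p}"
  proof -
    have "t \<in> (\<lambda>u. p * exp (- u)) ` {0..}" if "0 < t" "t \<le> p" for t
      using that p by (intro image_eqI[where x="ln (p / t)"]) (auto simp: exp_minus)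
    then show ?thesis
      using p by auto
  qed
  have "((\<lambda>u. \<bar>- (p * exp (- u))\<bar> * f (p * exp (- u))) has_integral
      integral ((\<lambda>u. p * exp (- u)) ` {0..}) f) {0..}"
  proof (rule has_integral_change_of_variables_real)
    show "f absolutely_integrable_on (\<lambda>u. p * exp (- u)) ` {0..}"
      unfolding lower_image by (rule absolutely_integrable_on_subset[OF f]) auto
  qed (use p in \<open>auto simp: inj_on_def intro!: derivative_eq_intros\<close>)
  then show "((\<lambda>u. p * exp (- u) * f (p * exp (- u))) has_integral integral {0<..p} f) {0..}"
    using p by (simp add: lower_image abs_of_pos)
qed

lemma besselK_integral_representation:
  fixes x \<nu> :: real
  assumes x: "x > 0" and \<nu>: "\<nu> > 0"
  shows "integral {0..} (\<lambda>t. t powr (\<nu> - 1) * exp (- t - (x\<^sup>2 / 4) / t)) = 2 * (x / 2) powr \<nu> * besselK \<nu> x"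
proof -
  define F where "F = (\<lambda>t. t powr (\<nu> - 1) * exp (- t - (x\<^sup>2 / 4) / t))"
  define p where "p = x / 2"
  have p: "p > 0"
    using x by (simp add: p_def)
  have F_integrable: "F absolutely_integrable_on {0..}"
    unfolding F_def by (rule gen_inc_gamma_integrand_absolutely_integrable[OF \<nu>]) simp
  have F_exp: "p * exp u * F (p * exp u) = p powr \<nu> * (exp (\<nu> * u) * exp (- x * cosh u))" for u
  proof -
    have "p * exp u * (p * exp u) powr (\<nu> - 1) = p powr \<nu> * exp (\<nu> * u)"
      using p by (simp add: powr_mult exp_powr_real powr_diff exp_diff field_simps)
    moreover have "- (p * exp u) - (x\<^sup>2 / 4) / (p * exp u) = - x * cosh u"
      using p by (simp add: p_def cosh_def exp_minus field_simps power2_eq_square)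
    ultimately show ?thesis
      by (simp add: F_def mult.assoc[symmetric])
  qed
  have "F absolutely_integrable_on {0<..}"
    by (rule absolutely_integrable_on_subset[OF F_integrable]) auto
  note upper = has_integral_exp_substitution(1)[OF p this]
    and lower = has_integral_exp_substitution(2)[OF p this]
  have "p * exp u * F (p * exp u) + p * exp (- u) * F (p * exp (- u))
      = 2 * p powr \<nu> * (exp (- x * cosh u) * cosh (\<nu> * u))" for u
    using F_exp[of u] F_exp[of "- u"] by (simp add: cosh_def field_simps)
  then have "((\<lambda>u. 2 * p powr \<nu> * (exp (- x * cosh u) * cosh (\<nu> * u)))
      has_integral integral {p..} F + integral {0<..p} F) {0..}"
    using has_integral_add[OF upper lower] by simp
  then have "integral {0..} (\<lambda>u. 2 * p powr \<nu> * (exp (- x * cosh u) * cosh (\<nu> * u)))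
      = integral {p..} F + integral {0<..p} F"
    by (rule integral_unique)
  then have "2 * p powr \<nu> * besselK \<nu> x = integral {p..} F + integral {0<..p} F"
    by (simp add: besselK_def)
  also have "\<dots> = integral ({p..} \<union> {0<..p}) F"
  proof (rule integral_Un_absolutely_integrable[symmetric])
    show "F absolutely_integrable_on {p..} \<union> {0<..p}"
      by (rule absolutely_integrable_on_subset[OF F_integrable]) (use p in auto)
    show "negligible ({p..} \<inter> {0<..p})"
      by (rule negligible_subset[of "{p}"]) auto
  qed auto
  also have "\<dots> = integral {0..} F"
    by (intro integral_spike_set; rule negligible_subset[of "{0}"]) (use p in auto)
  finally show ?thesis
    by (simp add: F_def p_def)
qed

lemma matern_gen_inc_gamma_has_integral:
  assumes \<alpha>: "\<alpha> > 0" and \<nu>: "\<nu> > 0" and \<xi>: "\<xi> > 0" and h: "h \<ge> 0"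
  shows "((\<lambda>t. t powr (\<nu> - 1) * exp (- t) / Gamma \<nu> * exp (- (1 / (4 * \<alpha>\<^sup>2 * t) * h\<^sup>2)))
    has_integral matern h \<alpha> \<nu> - 1 / Gamma \<nu> * gen_inc_gamma \<nu> (1 / (4 * \<xi> * \<alpha>\<^sup>2)) (h\<^sup>2 / (4 * \<alpha>\<^sup>2)))
    {0..1 / (4 * \<xi> * \<alpha>\<^sup>2)}"
proof -
  define b where "b = 1 / (4 * \<xi> * \<alpha>\<^sup>2)"
  define c where "c = h\<^sup>2 / (4 * \<alpha>\<^sup>2)"
  define F where "F = (\<lambda>t. t powr (\<nu> - 1) * exp (- t - c / t))"
  have b: "b > 0"
    using \<xi> \<alpha> by (simp add: b_def)
  have \<Gamma>: "Gamma \<nu> > 0"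
    using \<nu> by (rule Gamma_real_pos)
  have F_integrable: "F absolutely_integrable_on {0..}"
    unfolding F_def by (rule gen_inc_gamma_integrand_absolutely_integrable[OF \<nu>]) (simp add: c_def)
  have total: "integral {0..} F = Gamma \<nu> * matern h \<alpha> \<nu>"
  proof (cases "h = 0")
    case True
    have "F = (\<lambda>t. t powr (\<nu> - 1) / exp t)"
    proof
      fix t :: real
      have "exp (- t - c / t) = inverse (exp t)"
        using True by (simp add: c_def exp_minus)
      then show "F t = t powr (\<nu> - 1) / exp t"
        unfolding F_def by (simp only: divide_inverse)
    qed
    then show ?thesis
      using Gamma_integral_real[OF \<nu>] True by (simp add: matern_def integral_unique)
  next
    case False
    define x where "x = h / \<alpha>"
    have x: "x > 0"
      using False h \<alpha> by (simp add: x_def)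
    have "c = x\<^sup>2 / 4"
      by (simp add: c_def x_def power_divide)
    then have "integral {0..} F = 2 * (x / 2) powr \<nu> * besselK \<nu> x"
      unfolding F_def by (simp only: besselK_integral_representation[OF x \<nu>])
    also have "2 * (x / 2) powr \<nu> = 2 powr (1 - \<nu>) * x powr \<nu>"
      using x by (simp add: powr_divide powr_diff)
    finally show ?thesis
      using False \<Gamma> by (simp add: matern_def x_def)
  qed
  have "{0..} = {0..b} \<union> {b..}"
    using b by auto
  moreover have "integral ({0..b} \<union> {b..}) F = integral {0..b} F + integral {b..} F"
    using F_integrable \<open>{0..} = {0..b} \<union> {b..}\<close>
    by (intro integral_Un_absolutely_integrable) (auto intro: negligible_subset[of "{b}"])
  ultimately have "integral {0..} F = integral {0..b} F + integral {b..} F"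
    by simp
  moreover have "gen_inc_gamma \<nu> b c = integral {b..} F"
    unfolding gen_inc_gamma_def F_def ..
  ultimately have lower_part:
    "integral {0..b} F / Gamma \<nu> = matern h \<alpha> \<nu> - 1 / Gamma \<nu> * gen_inc_gamma \<nu> b c"
    using total \<Gamma> by (simp add: field_simps)
  have integrand: "(\<lambda>t. F t / Gamma \<nu>)
      = (\<lambda>t. t powr (\<nu> - 1) * exp (- t) / Gamma \<nu> * exp (- (1 / (4 * \<alpha>\<^sup>2 * t) * h\<^sup>2)))"
  proof
    fix t
    have "exp (- t - c / t) = exp (- t) * exp (- (1 / (4 * \<alpha>\<^sup>2 * t) * h\<^sup>2))"
      by (simp add: c_def flip: exp_add)
    then show "F t / Gamma \<nu> = t powr (\<nu> - 1) * exp (- t) / Gamma \<nu> * exp (- (1 / (4 * \<alpha>\<^sup>2 * t) * h\<^sup>2))"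
      unfolding F_def by (simp add: mult_ac)
  qed
  have "((\<lambda>t. F t / Gamma \<nu>) has_integral integral {0..b} F / Gamma \<nu>) {0..b}"
    by (intro has_integral_divide integrable_integral set_lebesgue_integral_eq_integral(1)
        absolutely_integrable_on_subset[OF F_integrable]) auto
  then show ?thesis
    unfolding b_def[symmetric] c_def[symmetric] integrand[symmetric] lower_part[symmetric] .
qed

theorem proposition1:
  fixes \<alpha>1 \<nu>1 \<alpha>2 \<nu>2 \<omega>1 \<omega>2 \<xi>1 \<xi>2 :: real
    and k :: nat and a :: "nat \<Rightarrow> real" and s :: "nat \<Rightarrow> real ^ 'd"
  assumes "\<alpha>1 > 0" "\<nu>1 > 0" "\<alpha>2 > 0" "\<nu>2 > 0"
    and "\<omega>1 > 0" "\<omega>2 > 0" "\<xi>1 > 0" "\<xi>2 > 0"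
  shows "(\<Sum>i<k. \<Sum>j<k. a i * a j * phiCM \<alpha>1 \<nu>1 \<alpha>2 \<nu>2 \<omega>1 \<omega>2 \<xi>1 \<xi>2 (norm (s i - s j))) \<ge> 0"
proof -
  define \<phi>\<^sub>C where "\<phi>\<^sub>C h = lower_inc_gamma (\<nu>1/2) ((h\<^sup>2 + \<alpha>1) * \<xi>1) / Gamma (\<nu>1/2) * cauchy h \<alpha>1 \<nu>1" for h
  define \<phi>\<^sub>M where "\<phi>\<^sub>M h = matern h \<alpha>2 \<nu>2
    - 1 / Gamma \<nu>2 * gen_inc_gamma \<nu>2 (1 / (4 * \<xi>2 * \<alpha>2\<^sup>2)) (h\<^sup>2 / (4 * \<alpha>2\<^sup>2))" for h
  have "(\<Sum>i<k. \<Sum>j<k. a i * a j * \<phi>\<^sub>C (norm (s i - s j))) \<ge> 0"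
  proof (rule gaussian_mixture_psd[where g="\<lambda>u. u" and S="{0..\<xi>1}"])
    show "((\<lambda>u. \<alpha>1 powr (\<nu>1/2) / Gamma (\<nu>1/2) * (u powr (\<nu>1/2 - 1) * exp (- (\<alpha>1 * u)))
        * exp (- (u * h\<^sup>2))) has_integral \<phi>\<^sub>C h) {0..\<xi>1}" for h
      unfolding \<phi>\<^sub>C_def by (rule cauchy_lower_inc_gamma_has_integral[OF assms(1,2)])
  qed (use Gamma_real_pos[of "\<nu>1/2"] assms(2) in auto)
  moreover have "(\<Sum>i<k. \<Sum>j<k. a i * a j * \<phi>\<^sub>M (norm (s i - s j))) \<ge> 0"
  proof (rule gaussian_mixture_psd[where g="\<lambda>t. 1 / (4 * \<alpha>2\<^sup>2 * t)" and S="{0..1 / (4 * \<xi>2 * \<alpha>2\<^sup>2)}"])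
    show "((\<lambda>t. t powr (\<nu>2 - 1) * exp (- t) / Gamma \<nu>2 * exp (- (1 / (4 * \<alpha>2\<^sup>2 * t) * h\<^sup>2)))
        has_integral \<phi>\<^sub>M h) {0..1 / (4 * \<xi>2 * \<alpha>2\<^sup>2)}"
      if "h \<ge> 0" for h
      unfolding \<phi>\<^sub>M_def by (rule matern_gen_inc_gamma_has_integral[OF assms(3,4,8) that])
  qed (use Gamma_real_pos[OF assms(4)] in auto)
  moreover have "(\<Sum>i<k. \<Sum>j<k. a i * a j * phiCM \<alpha>1 \<nu>1 \<alpha>2 \<nu>2 \<omega>1 \<omega>2 \<xi>1 \<xi>2 (norm (s i - s j)))
      = \<omega>1 * (\<Sum>i<k. \<Sum>j<k. a i * a j * \<phi>\<^sub>C (norm (s i - s j)))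
      + \<omega>2 * (\<Sum>i<k. \<Sum>j<k. a i * a j * \<phi>\<^sub>M (norm (s i - s j)))"
    by (simp add: phiCM_def \<phi>\<^sub>C_def \<phi>\<^sub>M_def sum_distrib_left sum.distrib[symmetric] distrib_left mult_ac)
  ultimately show ?thesis
    using assms(5,6) by simp
qed

end
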